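(* Let $N$ be a sub-sound tWF net, $M$ a sub-sound tWF net whose node set is disjoint from that of $N$, and $t$ a transition of $N$. Then the tWF net $N\otimes_t M$ is sub-sound.
   Context: Petri nets and markings. A Petri net is a triple $(P,T,F)$ with $P$ a finite set of places, $T$ a finite set of transitions, $P\cap T=\emptyset$, and $F\subseteq (P\times T)\cup(T\times P)$. For a node $x$, $\bullet x=\{y\mid (y,x)\in F\}$, $x\bullet=\{y\mid (x,y)\in F\}$. A marking is a multiset over $P$ (a function $P\to\mathbb N$); sets of places are identified with bags of multiplicity one, $+,-,\le$ are pointwise, and $k.m$ is the sum of $k$ copies of $m$. Transition $t$ is enabled at $m$ iff $\bullet t\le m$, firing gives $m-\bullet t+t\bullet$, and $m\xrightarrow{*}m'$ denotes reachability by a finite (possibly empty) firing sequence. Workflow nets. A pWF net is $(P,T,F,I,O)$ with $(P,T,F)$ a Petri net, $I,O\subseteq P$ non-empty, every node reachable by a directed path from some node of $I$, and some node of $O$ reachable from every node. A tWF net is the same with $I,O$ non-empty subsets of $T$. Input nodes may have incoming edges and output nodes outgoing edges. The place-completion $\mathrm{pc}(N)$ of a tWF net $N=(P,T,F,I,O)$ is obtained by adding two fresh places $p_i,p_o$ with edges $(p_i,t)$ for all $t\in I$ and $(t,p_o)$ for all $t\in O$, and taking input set $\{p_i\}$ and output set $\{p_o\}$. Sub-soundness. A pWF net is sub-sound if for all integers $k\ge k'\ge 0$ and every marking $m'$: if $k.I\xrightarrow{*}m'+k'.O$ then $m'\xrightarrow{*}(k-k').O$. A tWF net is sub-sound iff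 its place-completion is. Transition substitution. For a WF net $N=(P,T,F,I,O)$ and a tWF net $M=(P',T',F',I',O')$ with disjoint node sets and $t\in T$, $N\otimes_t M$ is obtained from $N$ by deleting $t$ and all edges incident to $t$, adding all nodes and edges of $M$, adding an edge $(q,t')$ for each $q\in\bullet_N t$ and $t'\in I'$, and an edge $(t',q)$ for each $t'\in O'$ and $q\in t\bullet_N$; its input set is $(I\setminus\{t\})\cup I'$ if $t\in I$ and $I$ otherwise, and its output set is $(O\setminus\{t\})\cup O'$ if $t\in O$ and $O$ otherwise. *)

theory Defs
  imports Main "HOL-Library.Multiset"
begin

record 'a net =
  places :: "'a set"
  trans  :: "'a set"
  flow   :: "('a \<times> 'a) set"
  inp    :: "'a set"
  outp   :: "'a set"

definition nodes :: "('a, 'b) net_scheme \<Rightarrow> 'a set" where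
  "nodes N = places N \<union> trans N"

definition preset :: "('a, 'b) net_scheme \<Rightarrow> 'a \<Rightarrow> 'a set" where
  "preset N x = {y. (y, x) \<in> flow N}"

definition postset :: "('a, 'b) net_scheme \<Rightarrow> 'a \<Rightarrow> 'a set" where
  "postset N x = {y. (x, y) \<in> flow N}"

definition petri_net :: "('a, 'b) net_scheme \<Rightarrow> bool" where
  "petri_net N \<longleftrightarrow> finite (places N) \<and> finite (trans N) \<and> places N \<inter> trans N = {}
     \<and> flow N \<subseteq> (places N \<times> trans N) \<union> (trans N \<times> places N)"

definition wf_conn :: "('a, 'b) net_scheme \<Rightarrow> bool" where
  "wf_conn N \<longleftrightarrow> (\<forall>x \<in> nodes N. \<exists>i \<in> inp N. (i, x) \<in> (flow N)\<^sup>*)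
                \<and> (\<forall>x \<in> nodes N. \<exists>z \<in> outp N. (x, z) \<in> (flow N)\<^sup>*)"

definition pWF :: "('a, 'b) net_scheme \<Rightarrow> bool" where
  "pWF N \<longleftrightarrow> petri_net N \<and> inp N \<noteq> {} \<and> outp N \<noteq> {}
     \<and> inp N \<subseteq> places N \<and> outp N \<subseteq> places N \<and> wf_conn N"

definition tWF :: "('a, 'b) net_scheme \<Rightarrow> bool" where
  "tWF N \<longleftrightarrow> petri_net N \<and> inp N \<noteq> {} \<and> outp N \<noteq> {}
     \<and> inp N \<subseteq> trans N \<and> outp N \<subseteq> trans N \<and> wf_conn N"

text \<open>Markings are multisets of places; a set of places is the bag of multiplicity one.\<close>
definition enabled :: "('a, 'b) net_scheme \<Rightarrow> 'a \<Rightarrow> 'a multiset \<Rightarrow> bool" where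
  "enabled N t m \<longleftrightarrow> mset_set (preset N t) \<subseteq># m"

definition step :: "('a, 'b) net_scheme \<Rightarrow> 'a multiset \<Rightarrow> 'a multiset \<Rightarrow> bool" where
  "step N m m' \<longleftrightarrow> (\<exists>t \<in> trans N. enabled N t m
        \<and> m' = m - mset_set (preset N t) + mset_set (postset N t))"

definition reach :: "('a, 'b) net_scheme \<Rightarrow> 'a multiset \<Rightarrow> 'a multiset \<Rightarrow> bool" where
  "reach N = (step N)\<^sup>*\<^sup>*"

definition sub_sound_p :: "('a, 'b) net_scheme \<Rightarrow> bool" where
  "sub_sound_p N \<longleftrightarrow> (\<forall>k k' :: nat. \<forall>m'. k' \<le> k \<longrightarrow>
      reach N (repeat_mset k (mset_set (inp N))) (m' + repeat_mset k' (mset_set (outp N)))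
      \<longrightarrow> reach N m' (repeat_mset (k - k') (mset_set (outp N))))"

text \<open>Place completion: old nodes are tagged Old, the fresh places are Pin and Pout.\<close>
datatype 'a pcnode = Old 'a | Pin | Pout

definition pc :: "'a net \<Rightarrow> 'a pcnode net" where
  "pc N = \<lparr> places = Old ` places N \<union> {Pin, Pout},
            trans = Old ` trans N,
            flow = map_prod Old Old ` flow N
                   \<union> {(Pin, Old t) | t. t \<in> inp N}
                   \<union> {(Old t, Pout) | t. t \<in> outp N},
            inp = {Pin},
            outp = {Pout} \<rparr>"

definition sub_sound_t :: "'a net \<Rightarrow> bool" where
  "sub_sound_t N \<longleftrightarrow> sub_sound_p (pc N)"

definition subst_trans :: "'a net \<Rightarrow> 'a \<Rightarrow> 'a net \<Rightarrow> 'a net" where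
  "subst_trans N t M = \<lparr> places = places N \<union> places M,
      trans = (trans N - {t}) \<union> trans M,
      flow = {e \<in> flow N. fst e \<noteq> t \<and> snd e \<noteq> t} \<union> flow M
             \<union> {(q, t'). q \<in> preset N t \<and> t' \<in> inp M}
             \<union> {(t', q). t' \<in> outp M \<and> q \<in> postset N t},
      inp = (if t \<in> inp N then (inp N - {t}) \<union> inp M else inp N),
      outp = (if t \<in> outp N then (outp N - {t}) \<union> outp M else outp N) \<rparr>"

end

theory Submission
  imports Defs
begin

(* Write NM for N \<otimes>_t M, and preT / postT for the pre- and post-multisets of t in the
   place completion pc N.  The proof works entirely with place completions and has three parts.

   1. Simulations.  A run of pc M is mimicked in pc NM after "expanding" each token on the
      input place Pin into preT and each token on Pout into postT.  Consequently a single firing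
      of t in pc N can be replayed in pc NM by a complete run of M (which exists because M is
      sub-sound), so every run of pc N is a run of pc NM.

   2. Decomposition invariant.  Every marking m reachable in pc NM from k tokens on Pin splits
      into its M-places and its remaining places such that, for some D and J, the N-part plus D
      copies of postT is reachable in pc N from k.Pin, and the M-part plus J.Pout is reachable in
      pc M from (J + D).Pin.  Here J + D counts the copies of M started so far (firings of t)
      and D those still running.

   3. Given k.Pin \<rightarrow>* m + k'.Pout in pc NM, sub-soundness of M completes the D running copies,
      which inside NM turns the M-part of m into D.postT; sub-soundness of N then leads from the
      resulting N-marking to (k - k').Pout, and part 1 transports both runs into pc NM. *)

abbreviation pre_mset :: "('a, 'b) net_scheme \<Rightarrow> 'a \<Rightarrow> 'a multiset" where
  "pre_mset X u \<equiv> mset_set (preset X u)"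

abbreviation post_mset :: "('a, 'b) net_scheme \<Rightarrow> 'a \<Rightarrow> 'a multiset" where
  "post_mset X u \<equiv> mset_set (postset X u)"

lemma step_fire:
  "u \<in> trans X \<Longrightarrow> pre_mset X u \<subseteq># m \<Longrightarrow> step X m (m - pre_mset X u + post_mset X u)"
  unfolding step_def enabled_def by blast

lemma stepE:
  assumes "step X m m'"
  obtains u where "u \<in> trans X" "pre_mset X u \<subseteq># m" "m' = m - pre_mset X u + post_mset X u"
  using assms unfolding step_def enabled_def by blast

lemma reach_refl: "reach X m m"
  unfolding reach_def by simp

lemma reach_trans: "reach X a b \<Longrightarrow> reach X b c \<Longrightarrow> reach X a c"
  unfolding reach_def by simp

lemma step_reach: "step X a b \<Longrightarrow> reach X a b"
  unfolding reach_def by simp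

lemma reach_simulation:
  assumes sim: "\<And>a b. step X a b \<Longrightarrow> reach Y (f a) (f b)"
    and "reach X a b"
  shows "reach Y (f a) (f b)"
  using assms(2) unfolding reach_def
  by (induction rule: rtranclp_induct) (auto dest: sim[unfolded reach_def])

lemma step_add: "step X a b \<Longrightarrow> step X (a + c) (b + c)"
proof (elim stepE)
  fix u assume u: "u \<in> trans X" and en: "pre_mset X u \<subseteq># a"
    and b: "b = a - pre_mset X u + post_mset X u"
  have en': "pre_mset X u \<subseteq># a + c"
    using en by (meson mset_subset_eq_add_left subset_mset.order_trans)
  have "b + c = (a - pre_mset X u + c) + post_mset X u"
    unfolding b by (simp add: add_ac)
  also have "a - pre_mset X u + c = a + c - pre_mset X u"
    using en by (rule subset_mset.add_diff_assoc2)
  finally show "step X (a + c) (b + c)"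
    using step_fire[OF u en'] by simp
qed

lemma reach_add:
  assumes "reach X a b"
  shows "reach X (a + c) (b + c)"
  using reach_simulation[where f = "\<lambda>m. m + c", OF step_reach[OF step_add] assms] .

lemma reach_fire_repeat:
  assumes u: "u \<in> trans X" and en: "repeat_mset n (pre_mset X u) \<subseteq># m"
  shows "reach X m (m - repeat_mset n (pre_mset X u) + repeat_mset n (post_mset X u))"
  using en
proof (induction n)
  case 0
  show ?case by (simp add: reach_refl)
next
  case (Suc n)
  let ?pre = "pre_mset X u" and ?post = "post_mset X u"
  have en_n: "repeat_mset n ?pre \<subseteq># m"
    using Suc.prems by (metis repeat_mset_Suc mset_subset_eq_add_right subset_mset.order_trans)
  let ?m' = "m - repeat_mset n ?pre + repeat_mset n ?post"
  have pre_le: "?pre \<subseteq># m - repeat_mset n ?pre"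
    using Suc.prems en_n by (simp add: subset_mset.le_diff_conv2)
  then have en': "?pre \<subseteq># ?m'"
    by (meson mset_subset_eq_add_left subset_mset.order_trans)
  have "?m' - ?pre = m - repeat_mset n ?pre - ?pre + repeat_mset n ?post"
    using subset_mset.add_diff_assoc2[OF pre_le, of "repeat_mset n ?post"] by simp
  then have eq: "?m' - ?pre + ?post = m - repeat_mset (Suc n) ?pre + repeat_mset (Suc n) ?post"
    by (simp add: diff_diff_add_mset add_ac)
  show ?case
    unfolding eq[symmetric] by (rule reach_trans[OF Suc.IH[OF en_n] step_reach[OF step_fire[OF u en']]])
qed

lemma finite_preset: "petri_net X \<Longrightarrow> finite (preset X u)"
  unfolding petri_net_def preset_def
  by (rule finite_subset[of _ "places X \<union> trans X"]) auto

lemma finite_postset: "petri_net X \<Longrightarrow> finite (postset X u)"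
  unfolding petri_net_def postset_def
  by (rule finite_subset[of _ "places X \<union> trans X"]) auto

lemma preset_subset_places: "petri_net X \<Longrightarrow> u \<in> trans X \<Longrightarrow> preset X u \<subseteq> places X"
  unfolding petri_net_def preset_def by blast

lemma postset_subset_places: "petri_net X \<Longrightarrow> u \<in> trans X \<Longrightarrow> postset X u \<subseteq> places X"
  unfolding petri_net_def postset_def by blast

lemma trans_pc [simp]: "trans (pc X) = Old ` trans X"
  and inp_pc [simp]: "inp (pc X) = {Pin}"
  and outp_pc [simp]: "outp (pc X) = {Pout}"
  by (simp_all add: pc_def)

lemma preset_pc: "preset (pc X) (Old u) = Old ` preset X u \<union> (if u \<in> inp X then {Pin} else {})"
  by (auto simp: preset_def pc_def)

lemma postset_pc: "postset (pc X) (Old u) = Old ` postset X u \<union> (if u \<in> outp X then {Pout} else {})"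
  by (auto simp: postset_def pc_def)

lemma step_pcE:
  assumes "step (pc X) a b"
  obtains u where "u \<in> trans X" "pre_mset (pc X) (Old u) \<subseteq># a"
    "b = a - pre_mset (pc X) (Old u) + post_mset (pc X) (Old u)"
proof -
  from assms obtain u' where "u' \<in> trans (pc X)" "pre_mset (pc X) u' \<subseteq># a"
    "b = a - pre_mset (pc X) u' + post_mset (pc X) u'"
    by (rule stepE)
  then show ?thesis using that by auto
qed

lemma mset_set_Old_insert:
  assumes "finite A" and "x \<notin> range Old"
  shows "mset_set (Old ` A \<union> (if P then {x} else {})) = image_mset Old (mset_set A) + replicate_mset (of_bool P) x"
  using assms by (auto simp: image_mset_mset_set inj_on_def image_iff)

lemma pre_mset_pc:
  "petri_net X \<Longrightarrow>
    pre_mset (pc X) (Old u) = image_mset Old (pre_mset X u) + replicate_mset (of_bool (u \<in> inp X)) Pin"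
  unfolding preset_pc by (rule mset_set_Old_insert) (auto simp: finite_preset)

lemma post_mset_pc:
  "petri_net X \<Longrightarrow>
    post_mset (pc X) (Old u) = image_mset Old (post_mset X u) + replicate_mset (of_bool (u \<in> outp X)) Pout"
  unfolding postset_pc by (rule mset_set_Old_insert) (auto simp: finite_postset)

(* Pout is never consumed, so the number of tokens on Pout can only grow along a run. *)
lemma Pout_notin_preset_pc: "Pout \<notin> preset (pc X) x"
  by (auto simp: preset_def pc_def)

lemma count_Pout_reach:
  assumes "reach (pc X) a b"
  shows "count a Pout \<le> count b Pout"
  using assms unfolding reach_def
proof (induction rule: rtranclp_induct)
  case (step b c)
  from step.hyps(2) obtain u where "c = b - pre_mset (pc X) u + post_mset (pc X) u"
    by (rule stepE)
  moreover have "count (pre_mset (pc X) u) Pout = 0"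
    using Pout_notin_preset_pc by (metis count_mset_set(3))
  ultimately show ?case using step.IH by simp
qed simp

lemma sub_sound_pcD:
  "sub_sound_p (pc X) \<Longrightarrow> k' \<le> k \<Longrightarrow>
    reach (pc X) (replicate_mset k Pin) (m + replicate_mset k' Pout) \<Longrightarrow>
    reach (pc X) m (replicate_mset (k - k') Pout)"
  unfolding sub_sound_p_def by simp

lemma sub_sound_pc_completes:
  assumes "sub_sound_p (pc X)"
  shows "reach (pc X) {#Pin#} {#Pout#}"
  using sub_sound_pcD[OF assms, of 0 1 "{#Pin#}"] by (simp add: reach_refl)

(* In a sub-sound net, k started cases never produce more than k output tokens: otherwise
   sub-soundness would lead from a marking containing Pout to the empty marking. *)
lemma sub_sound_pc_outputs_bounded:
  assumes sound: "sub_sound_p (pc X)"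
    and r: "reach (pc X) (replicate_mset k Pin) (m + replicate_mset k' Pout)"
  shows "k' \<le> k"
proof (rule ccontr)
  assume "\<not> k' \<le> k"
  then have "m + replicate_mset k' Pout = (m + replicate_mset (k' - k) Pout) + replicate_mset k Pout"
    by (simp add: multiset_eq_iff)
  then have "reach (pc X) (m + replicate_mset (k' - k) Pout) (replicate_mset (k - k) Pout)"
    using sub_sound_pcD[OF sound le_refl] r by metis
  then have "count (m + replicate_mset (k' - k) Pout) Pout \<le> 0"
    using count_Pout_reach by fastforce
  with \<open>\<not> k' \<le> k\<close> show False by simp
qed

lemma filter_mset_all: "(\<And>x. x \<in># A \<Longrightarrow> P x) \<Longrightarrow> filter_mset P A = A"
  by (induction A) auto

lemma replicate_mset_add: "replicate_mset (m + n) x = replicate_mset m x + replicate_mset n x"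
  by (simp add: multiset_eq_iff)

lemma filter_repeat_mset: "filter_mset P (repeat_mset n A) = repeat_mset n (filter_mset P A)"
  by (induction n) auto

(* The setting of the theorem. *)
locale transition_substitution =
  fixes N M :: "'a net" and t :: 'a
  assumes petri_N: "petri_net N" and petri_M: "petri_net M"
    and inp_N: "inp N \<subseteq> trans N" and outp_N: "outp N \<subseteq> trans N"
    and inp_M: "inp M \<subseteq> trans M" and outp_M: "outp M \<subseteq> trans M"
    and disjoint: "nodes N \<inter> nodes M = {}"
    and t_N: "t \<in> trans N"
begin

abbreviation NM :: "'a net" where
  "NM \<equiv> subst_trans N t M"

abbreviation preT :: "'a pcnode multiset" where
  "preT \<equiv> pre_mset (pc N) (Old t)"

abbreviation postT :: "'a pcnode multiset" where
  "postT \<equiv> post_mset (pc N) (Old t)"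

lemma trans_NM: "trans NM = (trans N - {t}) \<union> trans M"
  by (simp add: subst_trans_def)

lemma flow_N: "flow N \<subseteq> nodes N \<times> nodes N"
  using petri_N unfolding petri_net_def nodes_def by blast

lemma flow_M: "flow M \<subseteq> nodes M \<times> nodes M"
  using petri_M unfolding petri_net_def nodes_def by blast

lemma NM_at_N:
  assumes u: "u \<in> trans N" "u \<noteq> t"
  shows "preset (pc NM) (Old u) = preset (pc N) (Old u)"
    and "postset (pc NM) (Old u) = postset (pc N) (Old u)"
proof -
  have places: "preset N u \<subseteq> places N" "postset N u \<subseteq> places N"
    "preset N t \<subseteq> places N" "postset N t \<subseteq> places N"
    using preset_subset_places[OF petri_N] postset_subset_places[OF petri_N] u t_N by auto
  have "u \<notin> nodes M" "places N \<inter> trans N = {}"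
    using u disjoint petri_N by (auto simp: nodes_def petri_net_def)
  then have "preset NM u = preset N u" "postset NM u = postset N u"
    "u \<in> inp NM \<longleftrightarrow> u \<in> inp N" "u \<in> outp NM \<longleftrightarrow> u \<in> outp N"
    using u places flow_M inp_M outp_M
    by (auto simp: subst_trans_def preset_def postset_def nodes_def)
  then show "preset (pc NM) (Old u) = preset (pc N) (Old u)"
    and "postset (pc NM) (Old u) = postset (pc N) (Old u)"
    by (simp_all add: preset_pc postset_pc)
qed

lemma NM_at_M:
  assumes u: "u \<in> trans M"
  shows "pre_mset (pc NM) (Old u) =
           image_mset Old (pre_mset M u) + repeat_mset (of_bool (u \<in> inp M)) preT"
    and "post_mset (pc NM) (Old u) =
           image_mset Old (post_mset M u) + repeat_mset (of_bool (u \<in> outp M)) postT"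
proof -
  have places: "preset M u \<subseteq> places M" "postset M u \<subseteq> places M"
    "preset N t \<subseteq> places N" "postset N t \<subseteq> places N"
    using preset_subset_places[OF petri_M] postset_subset_places[OF petri_M] u
      preset_subset_places[OF petri_N] postset_subset_places[OF petri_N] t_N by auto
  have "u \<notin> nodes N" "places N \<inter> places M = {}"
    using u disjoint by (auto simp: nodes_def)
  then have "preset NM u = preset M u \<union> (if u \<in> inp M then preset N t else {})"
    "postset NM u = postset M u \<union> (if u \<in> outp M then postset N t else {})"
    "u \<in> inp NM \<longleftrightarrow> t \<in> inp N \<and> u \<in> inp M" "u \<in> outp NM \<longleftrightarrow> t \<in> outp N \<and> u \<in> outp M"
    using u places flow_N inp_N outp_N
    by (auto simp: subst_trans_def preset_def postset_def nodes_def)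
  then have sets: "preset (pc NM) (Old u) = Old ` preset M u \<union> (if u \<in> inp M then preset (pc N) (Old t) else {})"
    "postset (pc NM) (Old u) = Old ` postset M u \<union> (if u \<in> outp M then postset (pc N) (Old t) else {})"
    by (auto simp: preset_pc postset_pc)
  have disj: "Old ` preset M u \<inter> preset (pc N) (Old t) = {}"
    "Old ` postset M u \<inter> postset (pc N) (Old t) = {}"
    using places \<open>places N \<inter> places M = {}\<close> by (auto simp: preset_pc postset_pc)
  have fin: "finite (preset M u)" "finite (postset M u)"
    "finite (preset (pc N) (Old t))" "finite (postset (pc N) (Old t))"
    using finite_preset[OF petri_N] finite_postset[OF petri_N]
      finite_preset[OF petri_M] finite_postset[OF petri_M] by (auto simp: preset_pc postset_pc)
  show "pre_mset (pc NM) (Old u) =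
          image_mset Old (pre_mset M u) + repeat_mset (of_bool (u \<in> inp M)) preT"
    using disj fin by (simp add: sets mset_set_Union image_mset_mset_set inj_on_def)
  show "post_mset (pc NM) (Old u) =
          image_mset Old (post_mset M u) + repeat_mset (of_bool (u \<in> outp M)) postT"
    using disj fin by (simp add: sets mset_set_Union image_mset_mset_set inj_on_def)
qed

abbreviation in_M :: "'a pcnode \<Rightarrow> bool" where
  "in_M x \<equiv> x \<in> Old ` places M"

abbreviation proj_M :: "'a pcnode multiset \<Rightarrow> 'a pcnode multiset" where
  "proj_M m \<equiv> filter_mset in_M m"

abbreviation proj_N :: "'a pcnode multiset \<Rightarrow> 'a pcnode multiset" where
  "proj_N m \<equiv> filter_mset (\<lambda>x. \<not> in_M x) m"

definition expand_place :: "'a pcnode \<Rightarrow> 'a pcnode multiset" where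
  "expand_place x = (case x of Pin \<Rightarrow> preT | Pout \<Rightarrow> postT | Old p \<Rightarrow> {#Old p#})"

definition expand :: "'a pcnode multiset \<Rightarrow> 'a pcnode multiset" where
  "expand m = sum_mset (image_mset expand_place m)"

lemma expand_add [simp]: "expand (a + b) = expand a + expand b"
  by (simp add: expand_def)

lemma expand_Old [simp]: "expand (image_mset Old A) = image_mset Old A"
  by (induction A) (simp_all add: expand_def expand_place_def)

lemma expand_Pin [simp]: "expand (replicate_mset n Pin) = repeat_mset n preT"
  and expand_Pout [simp]: "expand (replicate_mset n Pout) = repeat_mset n postT"
  by (induction n) (simp_all add: expand_def expand_place_def)

lemma expand_filter_M: "expand (filter_mset in_M m) = filter_mset in_M m"
  by (induction m) (auto simp: expand_def expand_place_def)

lemma expand_pre_post_M: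
  assumes u: "u \<in> trans M"
  shows "expand (pre_mset (pc M) (Old u)) = pre_mset (pc NM) (Old u)"
    and "expand (post_mset (pc M) (Old u)) = post_mset (pc NM) (Old u)"
  using NM_at_M[OF u] by (simp_all add: pre_mset_pc[OF petri_M] post_mset_pc[OF petri_M])

lemma expand_step:
  assumes "step (pc M) a b"
  shows "step (pc NM) (expand a) (expand b)"
  using assms
proof (rule step_pcE)
  fix u assume u: "u \<in> trans M" and en: "pre_mset (pc M) (Old u) \<subseteq># a"
    and b: "b = a - pre_mset (pc M) (Old u) + post_mset (pc M) (Old u)"
  define rest where "rest = a - pre_mset (pc M) (Old u)"
  have a: "a = pre_mset (pc M) (Old u) + rest" and b': "b = rest + post_mset (pc M) (Old u)"
    using en b unfolding rest_def by simp_all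
  have "Old u \<in> trans (pc NM)" using u trans_NM by simp
  moreover have "pre_mset (pc NM) (Old u) \<subseteq># expand a"
    unfolding a by (simp add: expand_pre_post_M[OF u])
  moreover have "expand b = expand a - pre_mset (pc NM) (Old u) + post_mset (pc NM) (Old u)"
    unfolding a b' by (simp add: expand_pre_post_M[OF u])
  ultimately show ?thesis by (metis step_fire)
qed

lemma reach_expand: "reach (pc M) a b \<Longrightarrow> reach (pc NM) (expand a + c) (expand b + c)"
  using reach_simulation[of "pc M" "pc NM" expand, OF step_reach[OF expand_step]] reach_add by blast

(* Every run of pc N is a run of pc NM: a firing of t is replaced by a complete run of M. *)
lemma reach_N_in_NM:
  assumes sound_M: "sub_sound_p (pc M)" and r: "reach (pc N) a b"
  shows "reach (pc NM) a b"
proof (rule reach_simulation[where f = id, simplified, OF _ r])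
  fix a b assume "step (pc N) a b"
  then obtain u where u: "u \<in> trans N" and en: "pre_mset (pc N) (Old u) \<subseteq># a"
    and b: "b = a - pre_mset (pc N) (Old u) + post_mset (pc N) (Old u)"
    by (rule step_pcE)
  show "reach (pc NM) a b"
  proof (cases "u = t")
    case True
    have "reach (pc NM) (expand {#Pin#} + (a - preT)) (expand {#Pout#} + (a - preT))"
      using reach_expand[OF sub_sound_pc_completes[OF sound_M]] .
    moreover have "expand {#Pin#} + (a - preT) = a" "expand {#Pout#} + (a - preT) = b"
      using en b True by (simp_all add: expand_def expand_place_def add.commute)
    ultimately show ?thesis by simp
  next
    case False
    have "Old u \<in> trans (pc NM)" using u False trans_NM by simp
    then have "step (pc NM) a b"
      unfolding b NM_at_N[OF u False, symmetric] by (rule step_fire) (simp add: NM_at_N[OF u False] en)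
    then show ?thesis by (rule step_reach)
  qed
qed

lemma N_pre_post_not_in_M:
  assumes u: "u \<in> trans N"
  shows "x \<in># pre_mset (pc N) (Old u) \<Longrightarrow> \<not> in_M x"
    and "x \<in># post_mset (pc N) (Old u) \<Longrightarrow> \<not> in_M x"
proof -
  have "preset N u \<subseteq> places N" "postset N u \<subseteq> places N" "places N \<inter> places M = {}"
    using preset_subset_places[OF petri_N u] postset_subset_places[OF petri_N u] disjoint
    by (auto simp: nodes_def)
  then show "x \<in># pre_mset (pc N) (Old u) \<Longrightarrow> \<not> in_M x"
    and "x \<in># post_mset (pc N) (Old u) \<Longrightarrow> \<not> in_M x"
    by (auto simp: pre_mset_pc[OF petri_N] post_mset_pc[OF petri_N] finite_preset[OF petri_N]
        finite_postset[OF petri_N] split: if_splits)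
qed

lemma proj_pre_post_t:
  "proj_N preT = preT" "proj_N postT = postT" "proj_M preT = {#}" "proj_M postT = {#}"
  using N_pre_post_not_in_M[OF t_N] by (auto intro: filter_mset_all)

lemma M_pre_post_in_M:
  assumes u: "u \<in> trans M"
  shows "x \<in># image_mset Old (pre_mset M u) \<Longrightarrow> in_M x"
    and "x \<in># image_mset Old (post_mset M u) \<Longrightarrow> in_M x"
  using preset_subset_places[OF petri_M u] postset_subset_places[OF petri_M u]
    finite_preset[OF petri_M] finite_postset[OF petri_M] by auto

(* The invariant of part 2: J + D copies of M have been started, J of them completed, and in N
   transition t has fired J + D times, so D copies of postT are still owed to the N-part. *)
definition decomposed :: "nat \<Rightarrow> 'a pcnode multiset \<Rightarrow> bool" where
  "decomposed k m \<longleftrightarrow> (\<exists>D J.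
      reach (pc N) (replicate_mset k Pin) (proj_N m + repeat_mset D postT) \<and>
      reach (pc M) (replicate_mset (J + D) Pin) (proj_M m + replicate_mset J Pout))"

lemma decomposed_init: "decomposed k (replicate_mset k Pin)"
proof -
  have init: "proj_N (replicate_mset k Pin) = replicate_mset k Pin" "proj_M (replicate_mset k Pin) = {#}"
    by (induction k) auto
  show ?thesis
    unfolding decomposed_def init by (intro exI[of _ 0]) (simp add: reach_refl)
qed

lemma decomposed_step_N:
  assumes u: "u \<in> trans N" "u \<noteq> t"
    and en: "pre_mset (pc NM) (Old u) \<subseteq># m"
    and dec: "decomposed k m"
  shows "decomposed k (m - pre_mset (pc NM) (Old u) + post_mset (pc NM) (Old u))"
proof -
  let ?pre = "pre_mset (pc N) (Old u)" and ?post = "post_mset (pc N) (Old u)"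
  let ?m' = "m - ?pre + ?post"
  have proj: "proj_M ?pre = {#}" "proj_M ?post = {#}" "proj_N ?pre = ?pre" "proj_N ?post = ?post"
    using N_pre_post_not_in_M[OF u(1)] by (auto intro: filter_mset_all)
  have "proj_N ?pre \<subseteq># proj_N m"
    using en by (intro multiset_filter_mono) (simp add: NM_at_N[OF u])
  then have "step (pc N) (proj_N m) (proj_N m - ?pre + ?post)"
    using u proj by (intro step_fire) auto
  then have "step (pc N) (proj_N m) (proj_N ?m')"
    using proj by simp
  moreover obtain D J where
    RN: "reach (pc N) (replicate_mset k Pin) (proj_N m + repeat_mset D postT)" and
    RM: "reach (pc M) (replicate_mset (J + D) Pin) (proj_M m + replicate_mset J Pout)"
    using dec unfolding decomposed_def by blast
  ultimately have "reach (pc N) (replicate_mset k Pin) (proj_N ?m' + repeat_mset D postT)"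
    by (meson reach_trans step_reach step_add)
  moreover have "proj_M ?m' = proj_M m"
    unfolding filter_union_mset filter_diff_mset proj by simp
  ultimately show ?thesis
    using RM unfolding decomposed_def NM_at_N[OF u] by auto
qed

(* Firing a transition u of M: on the M-side u fires, fed by a fresh Pin token if u is an input
   transition; on the N-side t fires once in that case, and an output transition pays back one
   owed postT, which is possible because M cannot complete more copies than were started. *)
lemma decomposed_step_M:
  assumes sound_M: "sub_sound_p (pc M)"
    and u: "u \<in> trans M"
    and en: "pre_mset (pc NM) (Old u) \<subseteq># m"
    and dec: "decomposed k m"
  shows "decomposed k (m - pre_mset (pc NM) (Old u) + post_mset (pc NM) (Old u))"
    (is "decomposed k ?m'")
proof -
  obtain D J where
    RN: "reach (pc N) (replicate_mset k Pin) (proj_N m + repeat_mset D postT)" and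
    RM: "reach (pc M) (replicate_mset (J + D) Pin) (proj_M m + replicate_mset J Pout)"
    using dec unfolding decomposed_def by blast
  define a :: nat where "a = of_bool (u \<in> inp M)"
  define b :: nat where "b = of_bool (u \<in> outp M)"
  define pM where "pM = image_mset Old (pre_mset M u)"
  define qM where "qM = image_mset Old (post_mset M u)"
  have pre: "pre_mset (pc NM) (Old u) = pM + repeat_mset a preT"
    and post: "post_mset (pc NM) (Old u) = qM + repeat_mset b postT"
    using NM_at_M[OF u] unfolding a_def b_def pM_def qM_def by simp_all
  have pre_M: "pre_mset (pc M) (Old u) = pM + replicate_mset a Pin"
    and post_M: "post_mset (pc M) (Old u) = qM + replicate_mset b Pout"
    unfolding a_def b_def pM_def qM_def by (simp_all add: pre_mset_pc[OF petri_M] post_mset_pc[OF petri_M])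
  have proj: "proj_M pM = pM" "proj_M qM = qM" "proj_N pM = {#}" "proj_N qM = {#}"
    "proj_N (repeat_mset a preT) = repeat_mset a preT" "proj_M (repeat_mset a preT) = {#}"
    "proj_N (repeat_mset b postT) = repeat_mset b postT" "proj_M (repeat_mset b postT) = {#}"
    using M_pre_post_in_M[OF u] unfolding pM_def qM_def filter_repeat_mset proj_pre_post_t
    by (auto intro: filter_mset_all)
  have "proj_M (pre_mset (pc NM) (Old u)) \<subseteq># proj_M m"
    "proj_N (pre_mset (pc NM) (Old u)) \<subseteq># proj_N m"
    using en by (simp_all only: multiset_filter_mono)
  then obtain rM rN where rM: "proj_M m = pM + rM" and rN: "proj_N m = repeat_mset a preT + rN"
    unfolding pre filter_union_mset proj by (auto simp: mset_subset_eq_exists_conv)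
  have m': "proj_M ?m' = rM + qM" "proj_N ?m' = rN + repeat_mset b postT"
    unfolding pre post filter_union_mset filter_diff_mset proj rM rN by simp_all
  have "step (pc M) (pM + rM + replicate_mset a Pin) (rM + qM + replicate_mset b Pout)"
    using step_fire[OF _ , of "Old u" "pc M" "pM + rM + replicate_mset a Pin"] u
    by (simp add: pre_M post_M add_ac)
  from reach_add[OF RM, of "replicate_mset a Pin"] reach_add[OF step_reach[OF this], of "replicate_mset J Pout"]
  have RM': "reach (pc M) (replicate_mset (J + D + a) Pin) (proj_M ?m' + replicate_mset (J + b) Pout)"
    unfolding m' rM by (simp add: reach_trans replicate_mset_add add_ac)
  then have "J + b \<le> J + D + a"
    by (rule sub_sound_pc_outputs_bounded[OF sound_M])
  then have b_le: "b \<le> D + a" by simp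
  have "reach (pc N) (repeat_mset a preT + rN + repeat_mset D postT)
      (repeat_mset a preT + rN + repeat_mset D postT - repeat_mset a preT + repeat_mset a postT)"
    by (rule reach_fire_repeat) (simp_all add: t_N)
  also have "repeat_mset a preT + rN + repeat_mset D postT - repeat_mset a preT + repeat_mset a postT
      = proj_N ?m' + repeat_mset (D + a - b) postT"
    unfolding m' using b_le by (simp add: repeat_mset_distrib[symmetric] add_ac)
  finally have RN': "reach (pc N) (replicate_mset k Pin) (proj_N ?m' + repeat_mset (D + a - b) postT)"
    using RN unfolding rN by (rule reach_trans[rotated])
  have "J + D + a = (J + b) + (D + a - b)" using b_le by simp
  with RM' have "reach (pc M) (replicate_mset ((J + b) + (D + a - b)) Pin)
      (proj_M ?m' + replicate_mset (J + b) Pout)"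
    by simp
  with RN' show ?thesis
    unfolding decomposed_def by blast
qed

lemma decomposed_reach:
  assumes sound_M: "sub_sound_p (pc M)"
    and "reach (pc NM) (replicate_mset k Pin) m"
  shows "decomposed k m"
  using assms(2) unfolding reach_def
proof (induction rule: rtranclp_induct)
  case base
  show ?case by (rule decomposed_init)
next
  case (step m m')
  from step.hyps(2) obtain u where u: "u \<in> trans NM" and en: "pre_mset (pc NM) (Old u) \<subseteq># m"
    and m': "m' = m - pre_mset (pc NM) (Old u) + post_mset (pc NM) (Old u)"
    by (rule step_pcE)
  show ?case
  proof (cases "u \<in> trans M")
    case True
    show ?thesis unfolding m' by (rule decomposed_step_M[OF sound_M True en step.IH])
  next
    case False
    with u have "u \<in> trans N" "u \<noteq> t" by (auto simp: trans_NM)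
    then show ?thesis unfolding m' by (rule decomposed_step_N[OF _ _ en step.IH])
  qed
qed

theorem sub_sound_NM:
  assumes sound_N: "sub_sound_p (pc N)" and sound_M: "sub_sound_p (pc M)"
  shows "sub_sound_p (pc NM)"
  unfolding sub_sound_p_def
proof (intro allI impI)
  fix k k' :: nat and m
  assume le: "k' \<le> k"
    and "reach (pc NM) (repeat_mset k (mset_set (inp (pc NM)))) (m + repeat_mset k' (mset_set (outp (pc NM))))"
  then have "decomposed k (m + replicate_mset k' Pout)"
    using decomposed_reach[OF sound_M] by simp
  moreover have "proj_N (replicate_mset k' Pout) = replicate_mset k' Pout"
    "proj_M (replicate_mset k' Pout) = {#}"
    by (induction k') auto
  ultimately obtain D J where
    RN: "reach (pc N) (replicate_mset k Pin) ((proj_N m + repeat_mset D postT) + replicate_mset k' Pout)" and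
    RM: "reach (pc M) (replicate_mset (J + D) Pin) (proj_M m + replicate_mset J Pout)"
    unfolding decomposed_def by (auto simp: add_ac)
  (* The M-part completes its D running copies; inside NM this yields D copies of postT. *)
  have "reach (pc M) (proj_M m) (replicate_mset D Pout)"
    using sub_sound_pcD[OF sound_M _ RM] by simp
  from reach_expand[OF this, of "proj_N m"]
  have "reach (pc NM) m (proj_N m + repeat_mset D postT)"
    by (simp add: multiset_partition[of m in_M, symmetric] expand_filter_M add.commute)
  (* The result is an N-marking, which sub-soundness of N completes. *)
  moreover have "reach (pc N) (proj_N m + repeat_mset D postT) (replicate_mset (k - k') Pout)"
    using sub_sound_pcD[OF sound_N le RN] .
  then have "reach (pc NM) (proj_N m + repeat_mset D postT) (replicate_mset (k - k') Pout)"
    by (rule reach_N_in_NM[OF sound_M])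
  ultimately show "reach (pc NM) m (repeat_mset (k - k') (mset_set (outp (pc NM))))"
    by (simp add: reach_trans)
qed

end

theorem mainTheorem14:
  fixes N M :: "'a net" and t :: 'a
  assumes "tWF N" and "sub_sound_t N"
    and "tWF M" and "sub_sound_t M"
    and "nodes N \<inter> nodes M = {}"
    and "t \<in> trans N"
  shows "sub_sound_t (subst_trans N t M)"
proof -
  interpret transition_substitution N M t
    using assms unfolding tWF_def by unfold_locales auto
  show ?thesis
    using sub_sound_NM assms unfolding sub_sound_t_def by blast
qed

end
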